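(* Let $n\mid(q-1)$, let $\delta\ge2$, $b\ge1$, $m\ge1$ be integers with $\gcd(b,n)=1$, let $t\in\{0,\dots,n-1\}$ and let $\ell$ be an integer with $m-1+\delta\le\ell\le n-\delta$. Put $$A=\{\alpha^{t},\alpha^{t+b},\dots,\alpha^{t+(m-1)b},\alpha^{t+\ell b}\},\qquad B=\{1,\alpha^{b},\dots,\alpha^{(\delta-2)b}\},$$ and let $d_A^{\perp}$ be the minimum distance of the dual of $C_A$. Then $C_{AB}$ is a cyclic $(d_A^{\perp}-\delta+1,\delta)$-LRC over $\mathbb{F}_q$ with dimension $n-m-2\delta+3$. If moreover $\delta-2<n-m-d_A^{\perp}$, then $C_{AB}$ is an optimal $(d_A^{\perp}-\delta+1,\delta)$-LRC with minimum distance $m+\delta-1$.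
   Context: Let $q$ be a prime power and $n\mid(q-1)$, so the set $R_n$ of all $n$-th roots of unity lies in $\mathbb{F}_q$; let $\alpha\in\mathbb{F}_q$ be a primitive $n$-th root of unity. For $A,B\subseteq R_n$, $AB=\{\beta\gamma:\beta\in A,\gamma\in B\}$, and for $Z\subseteq R_n$, $C_Z$ denotes the cyclic code of length $n$ over $\mathbb{F}_q$ with complete defining set $Z$, i.e. the ideal generated by $\prod_{\beta\in Z}(x-\beta)$ in $\mathbb{F}_q[x]/(x^n-1)$, identified with a subspace of $\mathbb{F}_q^n$; it has dimension $n-|Z|$. Locality: for a linear code $C\subseteq\mathbb{F}_q^n$ and integers $r\ge1$, $\delta\ge2$, the $i$-th coordinate has $(r,\delta)$-locality if there is $S_i\subseteq\{1,\dots,n\}$ with $i\in S_i$, $|S_i|\le r+\delta-1$ such that the punctured code $C|_{S_i}$ has minimum distance at least $\delta$; $C$ is an $(r,\delta)$-LRC if every coordinate has $(r,\delta)$-locality. An $[n,k,d]$ $(r,\delta)$-LRC is optimal if $d=n-k-(\lceil k/r\rceil-1)(\delta-1)+1$ (this quantity is always an upper bound on $d$). *)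

theory Defs
  imports "HOL-Computational_Algebra.Polynomial" "HOL-Library.Function_Algebras" Complex_Main
begin

text \<open>Words of length n over a field are modelled as functions nat => 'a that vanish
  at all indices >= n; coordinates are indexed by 0,...,n-1.\<close>

definition words :: "nat \<Rightarrow> (nat \<Rightarrow> 'a::zero) set" where
  "words n = {c. \<forall>i\<ge>n. c i = 0}"

definition scale_word :: "'a::field \<Rightarrow> (nat \<Rightarrow> 'a) \<Rightarrow> (nat \<Rightarrow> 'a)" where
  "scale_word a c = (\<lambda>i. a * c i)"

definition code_dim :: "(nat \<Rightarrow> 'a::field) set \<Rightarrow> nat" where
  "code_dim C = vector_space.dim scale_word C"

definition roots_of_unity :: "nat \<Rightarrow> 'a::field set" where
  "roots_of_unity n = {x. x ^ n = 1}"

definition primitive_root_of_unity :: "nat \<Rightarrow> 'a::field \<Rightarrow> bool" where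
  "primitive_root_of_unity n \<alpha> \<longleftrightarrow> 0 < n \<and> \<alpha> ^ n = 1 \<and> (\<forall>k. 0 < k \<and> k < n \<longrightarrow> \<alpha> ^ k \<noteq> 1)"

definition set_prod :: "'a::times set \<Rightarrow> 'a set \<Rightarrow> 'a set" where
  "set_prod A B = {\<beta> * \<gamma> | \<beta> \<gamma>. \<beta> \<in> A \<and> \<gamma> \<in> B}"

text \<open>Cyclic code of length n with complete defining set Z: the ideal generated by
  prod_{beta in Z} (x - beta) in F[x]/(x^n - 1), identified with coefficient vectors.\<close>
definition cyclic_code :: "nat \<Rightarrow> 'a::field set \<Rightarrow> (nat \<Rightarrow> 'a) set" where
  "cyclic_code n Z =
     {(\<lambda>i. coeff ((f * (\<Prod>\<beta>\<in>Z. [:-\<beta>, 1:])) mod (monom 1 n - 1)) i) | f. True}"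

definition dual_code :: "nat \<Rightarrow> (nat \<Rightarrow> 'a::field) set \<Rightarrow> (nat \<Rightarrow> 'a) set" where
  "dual_code n C = {y \<in> words n. \<forall>c\<in>C. (\<Sum>i<n. c i * y i) = 0}"

definition is_cyclic :: "nat \<Rightarrow> (nat \<Rightarrow> 'a::zero) set \<Rightarrow> bool" where
  "is_cyclic n C \<longleftrightarrow> (\<forall>c\<in>C. (\<lambda>i. if i < n then c ((i + n - 1) mod n) else 0) \<in> C)"

definition hdist_on :: "nat set \<Rightarrow> (nat \<Rightarrow> 'a) \<Rightarrow> (nat \<Rightarrow> 'a) \<Rightarrow> nat" where
  "hdist_on S x y = card {i\<in>S. x i \<noteq> y i}"

definition min_dist :: "nat \<Rightarrow> (nat \<Rightarrow> 'a) set \<Rightarrow> nat" where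
  "min_dist n C = (LEAST w. \<exists>x\<in>C. \<exists>y\<in>C. (\<exists>i<n. x i \<noteq> y i) \<and> w = hdist_on {..<n} x y)"

definition punct_dist_ge :: "(nat \<Rightarrow> 'a) set \<Rightarrow> nat set \<Rightarrow> nat \<Rightarrow> bool" where
  "punct_dist_ge C S \<delta> \<longleftrightarrow>
     (\<forall>x\<in>C. \<forall>y\<in>C. (\<exists>i\<in>S. x i \<noteq> y i) \<longrightarrow> \<delta> \<le> hdist_on S x y)"

definition has_locality :: "nat \<Rightarrow> (nat \<Rightarrow> 'a) set \<Rightarrow> nat \<Rightarrow> nat \<Rightarrow> nat \<Rightarrow> bool" where
  "has_locality n C r \<delta> i \<longleftrightarrow>
     (\<exists>S. S \<subseteq> {..<n} \<and> i \<in> S \<and> card S \<le> r + \<delta> - 1 \<and> punct_dist_ge C S \<delta>)"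

definition is_LRC :: "nat \<Rightarrow> (nat \<Rightarrow> 'a) set \<Rightarrow> nat \<Rightarrow> nat \<Rightarrow> bool" where
  "is_LRC n C r \<delta> \<longleftrightarrow> 1 \<le> r \<and> 2 \<le> \<delta> \<and> (\<forall>i<n. has_locality n C r \<delta> i)"

definition is_optimal_LRC :: "nat \<Rightarrow> (nat \<Rightarrow> 'a::field) set \<Rightarrow> nat \<Rightarrow> nat \<Rightarrow> bool" where
  "is_optimal_LRC n C r \<delta> \<longleftrightarrow> is_LRC n C r \<delta> \<and>
     int (min_dist n C) = int n - int (code_dim C)
        - (\<lceil>real (code_dim C) / real r\<rceil> - 1) * (int \<delta> - 1) + 1"

end

theory Submission
  imports Defs "HOL-Library.FuncSet"
begin

text \<open>
  A word v lies in the cyclic code with defining set Z iff the sum of v i \<beta>^i over i < n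
  vanishes for all \<beta> \<in> Z. With \<theta> = \<alpha>^b, again a primitive n-th root of unity, and
  a j = \<alpha>^t \<theta>^j, the set AB consists of the a e for e in two runs of consecutive exponents,
  [0, m + \<delta> - 2) and [l, l + \<delta> - 1), so the BCH bound gives d(C_AB) \<ge> m + \<delta> - 1. The gaps [m, l) and (l, n) in the exponents of A
  make the inverses of the a j there zeros of every dual codeword of C_A, whence
  d_A^\<bottom> > max (l - m) (n - 1 - l) \<ge> \<delta> - 1.

  For f \<in> C_AB, c dual to C_A and \<gamma> \<in> B the word k \<mapsto> f k \<gamma>^k lies in C_A, so the product f c
  vanishes at 1, \<theta>, ..., \<theta>^(\<delta> - 2): on the support of c, f is zero or has weight at least \<delta>.
  Cyclic shifts of a dual codeword of minimum weight give such repair sets at every coordinate.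
  Conversely, counting over the finite field gives a nonzero f \<in> C_AB vanishing on all but
  \<delta> - 1 positions of such a support and on n + 1 - m - \<delta> - d_A^\<bottom> positions outside it;
  locality kills f on the whole support, leaving weight at most m + \<delta> - 1.
\<close>

interpretation word_space: vector_space "scale_word :: 'a::field \<Rightarrow> (nat \<Rightarrow> 'a) \<Rightarrow> _"
  by unfold_locales (auto simp: scale_word_def algebra_simps)

lemma sum_fun_apply: "sum f A i = (\<Sum>x\<in>A. f x i :: 'b::comm_monoid_add)"
  by (induction A rule: infinite_finite_induct) auto

section \<open>Cyclic codes as zero sets\<close>

definition eval_word :: "nat \<Rightarrow> (nat \<Rightarrow> 'a::field) \<Rightarrow> 'a \<Rightarrow> 'a" where
  "eval_word n v x = (\<Sum>i<n. v i * x ^ i)"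

definition word_poly :: "nat \<Rightarrow> (nat \<Rightarrow> 'a::field) \<Rightarrow> 'a poly" where
  "word_poly n v = (\<Sum>i<n. monom (v i) i)"

definition generator_poly :: "'a::field set \<Rightarrow> 'a poly" where
  "generator_poly Z = (\<Prod>\<beta>\<in>Z. [:-\<beta>, 1:])"

lemma coeff_word_poly: "coeff (word_poly n v) i = (if i < n then v i else 0)"
  by (simp add: word_poly_def coeff_sum coeff_monom)

lemma poly_word_poly: "poly (word_poly n v) x = eval_word n v x"
  by (simp add: word_poly_def eval_word_def poly_sum poly_monom)

lemma degree_word_poly_less: "0 < n \<Longrightarrow> degree (word_poly n v) < n"
  by (rule degree_lessI) (auto simp: coeff_word_poly)

lemma coeff_word_poly_words: "v \<in> words n \<Longrightarrow> coeff (word_poly n v) = v"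
  by (auto simp: coeff_word_poly words_def)

lemma coeff_in_words: "degree p < n \<Longrightarrow> coeff p \<in> words n"
  by (auto simp: words_def coeff_eq_0)

lemma eval_word_coeff:
  assumes "degree p < n"
  shows "eval_word n (coeff p) x = poly p x"
proof -
  have "poly p x = (\<Sum>i\<le>degree p. coeff p i * x ^ i)" by (rule poly_altdef)
  also have "\<dots> = (\<Sum>i<n. coeff p i * x ^ i)"
    by (rule sum.mono_neutral_left) (use assms in \<open>auto simp: coeff_eq_0\<close>)
  finally show ?thesis by (simp add: eval_word_def)
qed

lemma generator_poly_nonzero: "finite Z \<Longrightarrow> generator_poly Z \<noteq> 0"
  by (simp add: generator_poly_def prod_zero_iff)

lemma degree_generator_poly: "finite Z \<Longrightarrow> degree (generator_poly Z) = card Z"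
  by (simp add: generator_poly_def degree_prod_eq_sum_degree)

lemma poly_generator_poly_eq_0_iff: "finite Z \<Longrightarrow> poly (generator_poly Z) x = 0 \<longleftrightarrow> x \<in> Z"
  by (simp add: generator_poly_def poly_prod prod_zero_iff)

lemma generator_poly_dvd:
  assumes "finite Z" and "\<And>\<beta>. \<beta> \<in> Z \<Longrightarrow> poly p \<beta> = 0"
  shows "generator_poly Z dvd p"
  using assms
proof (induction Z arbitrary: p rule: finite_induct)
  case empty
  then show ?case by (simp add: generator_poly_def)
next
  case (insert \<gamma> Z)
  then obtain h where h: "p = generator_poly Z * h" by (auto elim!: dvdE)
  have "poly (generator_poly Z) \<gamma> \<noteq> 0"
    using insert.hyps by (simp add: poly_generator_poly_eq_0_iff)
  with h insert.prems[of \<gamma>] have "poly h \<gamma> = 0" by simp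
  then obtain h' where h': "h = [:-\<gamma>, 1:] * h'" by (auto simp: poly_eq_0_iff_dvd elim!: dvdE)
  have "generator_poly (insert \<gamma> Z) = [:-\<gamma>, 1:] * generator_poly Z"
    using insert.hyps by (simp add: generator_poly_def)
  with h h' show ?case by (metis dvdI mult.assoc mult.commute)
qed

lemma degree_monom_1_sub_1: "0 < n \<Longrightarrow> degree (monom (1::'a::field) n - 1) = n"
  by (rule antisym, rule degree_diff_le) (auto simp: degree_monom_le intro: le_degree)

lemma cyclic_code_eq_zeros:
  assumes "0 < n" and "finite Z" and "Z \<subseteq> roots_of_unity n"
  shows "cyclic_code n Z = {v \<in> words n. \<forall>\<beta>\<in>Z. eval_word n v \<beta> = 0}"
proof -
  let ?g = "generator_poly Z" and ?X = "monom (1::'a) n - 1"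
  have deg_X: "degree ?X = n" by (rule degree_monom_1_sub_1[OF assms(1)])
  then have X: "?X \<noteq> 0" using assms(1) by (metis degree_0 less_irrefl)
  show ?thesis
  proof (intro set_eqI iffI)
    fix v
    assume "v \<in> cyclic_code n Z"
    then obtain f where v: "v = coeff ((f * ?g) mod ?X)"
      by (auto simp: cyclic_code_def generator_poly_def fun_eq_iff)
    have deg: "degree ((f * ?g) mod ?X) < n"
      using degree_mod_less[OF X] deg_X assms(1) by (metis degree_0)
    have "poly ((f * ?g) mod ?X) \<beta> = 0" if "\<beta> \<in> Z" for \<beta>
    proof -
      have "poly ?X \<beta> = 0" and "poly ?g \<beta> = 0"
        using that assms(2,3) by (auto simp: roots_of_unity_def poly_monom poly_generator_poly_eq_0_iff)
      then show ?thesis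
        using arg_cong[OF div_mult_mod_eq[of "f * ?g" ?X], of "\<lambda>p. poly p \<beta>"] by simp
    qed
    with v deg show "v \<in> {v \<in> words n. \<forall>\<beta>\<in>Z. eval_word n v \<beta> = 0}"
      by (simp add: coeff_in_words eval_word_coeff)
  next
    fix v
    assume v: "v \<in> {v \<in> words n. \<forall>\<beta>\<in>Z. eval_word n v \<beta> = 0}"
    then have "?g dvd word_poly n v"
      using assms(2) by (intro generator_poly_dvd) (auto simp: poly_word_poly)
    then obtain h where h: "word_poly n v = ?g * h" by (auto elim!: dvdE)
    have "degree (h * ?g) < degree ?X"
      using degree_word_poly_less[OF assms(1), of v] deg_X by (simp add: h mult.commute)
    then have "(h * ?g) mod ?X = word_poly n v" by (simp add: h mult.commute mod_poly_less)
    with v have "v = coeff ((h * ?g) mod ?X)" by (simp add: coeff_word_poly_words)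
    then show "v \<in> cyclic_code n Z" by (auto simp: cyclic_code_def generator_poly_def fun_eq_iff)
  qed
qed

lemma subspace_cyclic_code:
  assumes "0 < n" and "finite Z" and "Z \<subseteq> roots_of_unity n"
  shows "word_space.subspace (cyclic_code n Z)"
  by (rule word_space.subspaceI)
    (auto simp: cyclic_code_eq_zeros[OF assms] words_def eval_word_def scale_word_def
      sum.distrib distrib_right mult.assoc simp flip: sum_distrib_left)

lemma coeff_mult_generator_poly_in_cyclic_code:
  assumes "0 < n" and "finite Z" and "Z \<subseteq> roots_of_unity n"
    and "degree (h * generator_poly Z) < n"
  shows "coeff (h * generator_poly Z) \<in> cyclic_code n Z"
  using assms by (simp add: cyclic_code_eq_zeros coeff_in_words eval_word_coeff
      poly_generator_poly_eq_0_iff)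

definition generator_multiple :: "'a::field set \<Rightarrow> nat \<Rightarrow> nat \<Rightarrow> 'a" where
  "generator_multiple Z j = coeff (monom 1 j * generator_poly Z)"

lemma sum_scale_generator_multiple:
  "(\<Sum>j<k. scale_word (u j) (generator_multiple Z j))
     = coeff ((\<Sum>j<k. monom (u j) j) * generator_poly Z)"
  by (auto simp: fun_eq_iff sum_fun_apply scale_word_def coeff_sum sum_distrib_right
      coeff_monom_mult generator_multiple_def intro!: sum.cong)

lemma inj_generator_multiple: "finite Z \<Longrightarrow> inj (generator_multiple Z)"
  by (rule injI)
    (simp add: generator_multiple_def coeff_inject generator_poly_nonzero monom_eq_iff')

lemma independent_generator_multiples:
  assumes "finite Z"
  shows "word_space.independent (generator_multiple Z ` {..<k})"
proof (rule word_space.independent_if_scalars_zero)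
  fix u x
  assume sum: "(\<Sum>x\<in>generator_multiple Z ` {..<k}. scale_word (u x) x) = 0"
    and "x \<in> generator_multiple Z ` {..<k}"
  then obtain j where j: "j < k" "x = generator_multiple Z j" by auto
  have "(\<Sum>j<k. monom (u (generator_multiple Z j)) j) * generator_poly Z = 0"
    using sum inj_on_subset[OF inj_generator_multiple[OF assms]]
    by (simp add: sum.reindex sum_scale_generator_multiple poly_eq_iff fun_eq_iff)
  then have "coeff (\<Sum>j<k. monom (u (generator_multiple Z j)) j) j = 0"
    using generator_poly_nonzero[OF assms] by simp
  with j show "u x = 0" by (simp add: coeff_sum coeff_monom)
qed simp

lemma span_generator_multiples:
  assumes "0 < n" and "finite Z" and "Z \<subseteq> roots_of_unity n"
  shows "word_space.span (generator_multiple Z ` {..<n - card Z}) = cyclic_code n Z"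
proof (rule word_space.span_subspace)
  let ?g = "generator_poly Z" and ?k = "n - card Z"
  have g0: "?g \<noteq> 0" and deg_g: "degree ?g = card Z"
    using assms(2) by (simp_all add: generator_poly_nonzero degree_generator_poly)
  show "generator_multiple Z ` {..<?k} \<subseteq> cyclic_code n Z"
    using g0 deg_g by (auto simp: generator_multiple_def degree_mult_eq degree_monom_eq
        intro!: coeff_mult_generator_poly_in_cyclic_code[OF assms])
  show "cyclic_code n Z \<subseteq> word_space.span (generator_multiple Z ` {..<?k})"
  proof
    fix v
    assume v: "v \<in> cyclic_code n Z"
    then have "?g dvd word_poly n v"
      using assms by (intro generator_poly_dvd) (auto simp: cyclic_code_eq_zeros poly_word_poly)
    then obtain h where h: "word_poly n v = h * ?g" by (metis dvdE mult.commute)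
    have "coeff h j = 0" if "?k \<le> j" for j
    proof (cases "h = 0")
      case False
      then have "degree h < ?k"
        using degree_word_poly_less[OF assms(1), of v] g0 deg_g by (simp add: h degree_mult_eq)
      with that show ?thesis by (simp add: coeff_eq_0)
    qed simp
    then have h_sum: "h = (\<Sum>j<?k. monom (coeff h j) j)"
      by (intro poly_eqI) (auto simp: coeff_sum coeff_monom not_less)
    have "v = coeff (h * ?g)"
      using v assms by (simp add: cyclic_code_eq_zeros coeff_word_poly_words flip: h)
    also have "\<dots> = coeff ((\<Sum>j<?k. monom (coeff h j) j) * ?g)"
      by (subst h_sum) (rule refl)
    also have "\<dots> = (\<Sum>j<?k. scale_word (coeff h j) (generator_multiple Z j))"
      by (rule sum_scale_generator_multiple[symmetric])
    also have "\<dots> \<in> word_space.span (generator_multiple Z ` {..<?k})"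
      by (rule word_space.span_sum, rule word_space.span_scale, rule word_space.span_base) simp
    finally show "v \<in> word_space.span (generator_multiple Z ` {..<?k})" .
  qed
qed (rule subspace_cyclic_code[OF assms])

lemma code_dim_cyclic_code:
  assumes "0 < n" and "finite Z" and "Z \<subseteq> roots_of_unity n"
  shows "code_dim (cyclic_code n Z) = n - card Z"
proof -
  have "code_dim (cyclic_code n Z) = card (generator_multiple Z ` {..<n - card Z})"
    unfolding code_dim_def span_generator_multiples[OF assms, symmetric]
    by (rule word_space.dim_span_eq_card_independent[OF independent_generator_multiples[OF assms(2)]])
  also have "\<dots> = n - card Z"
    using inj_on_subset[OF inj_generator_multiple[OF assms(2)]] by (simp add: card_image)
  finally show ?thesis .
qed

section \<open>Cyclic shifts and dual codes\<close>

lemma power_mod_eq_if_power_eq_1: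
  assumes "x ^ n = 1"
  shows "x ^ (e mod n) = (x::'a::monoid_mult) ^ e"
proof -
  have "x ^ e = x ^ (n * (e div n) + e mod n)" by simp
  also have "\<dots> = (x ^ n) ^ (e div n) * x ^ (e mod n)" by (simp only: power_add power_mult)
  finally show ?thesis using assms by simp
qed

lemma mod_add_shift_cancel:
  assumes "k < n"
  shows "((k + s) mod n + (n - s mod n)) mod n = (k::nat)"
proof -
  have "s mod n < n" using assms by simp
  moreover have "n * (s div n) + s mod n = s" by (rule mult_div_mod_eq)
  ultimately have "s + (n - s mod n) = n * Suc (s div n)" by (simp only: mult_Suc_right)
  then have "(k + s + (n - s mod n)) mod n = (k + n * Suc (s div n)) mod n"
    by (simp only: add.assoc)
  also have "\<dots> = k" using assms by (simp only: mod_mult_self2 mod_less)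
  finally have "(k + s + (n - s mod n)) mod n = k" .
  then show ?thesis by (simp add: mod_add_left_eq)
qed

lemma sum_mod_add_shift: "(\<Sum>k<n. g ((k + s) mod n)) = (\<Sum>k<(n::nat). g k)"
proof -
  have "inj_on (\<lambda>k. (k + s) mod n) {..<n}"
  proof (rule inj_onI)
    fix i j
    assume "i \<in> {..<n}" "j \<in> {..<n}" "(i + s) mod n = (j + s) mod n"
    then show "i = j" using mod_add_shift_cancel[of i n s] mod_add_shift_cancel[of j n s] by simp
  qed
  moreover have "(\<lambda>k. (k + s) mod n) ` {..<n} \<subseteq> {..<n}" by auto
  ultimately have "bij_betw (\<lambda>k. (k + s) mod n) {..<n} {..<n}"
    by (simp add: bij_betw_def endo_inj_surj)
  then show ?thesis by (rule sum.reindex_bij_betw)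
qed

definition cyclic_shift :: "nat \<Rightarrow> nat \<Rightarrow> (nat \<Rightarrow> 'a::zero) \<Rightarrow> nat \<Rightarrow> 'a" where
  "cyclic_shift n s v = (\<lambda>k. if k < n then v ((k + s) mod n) else 0)"

lemma cyclic_shift_in_words: "cyclic_shift n s v \<in> words n"
  by (simp add: cyclic_shift_def words_def)

lemma eval_cyclic_shift:
  assumes "\<beta> ^ n = 1"
  shows "\<beta> ^ s * eval_word n (cyclic_shift n s v) \<beta> = eval_word n v \<beta>"
proof -
  have "\<beta> ^ s * eval_word n (cyclic_shift n s v) \<beta> = (\<Sum>k<n. v ((k + s) mod n) * \<beta> ^ (k + s))"
    by (simp add: eval_word_def cyclic_shift_def sum_distrib_left power_add mult_ac)
  also have "\<dots> = (\<Sum>k<n. v ((k + s) mod n) * \<beta> ^ ((k + s) mod n))"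
    using assms by (simp add: power_mod_eq_if_power_eq_1)
  also have "\<dots> = eval_word n v \<beta>"
    by (simp add: eval_word_def sum_mod_add_shift[where g = "\<lambda>i. v i * \<beta> ^ i"])
  finally show ?thesis .
qed

lemma cyclic_shift_in_cyclic_code:
  assumes "0 < n" and "finite Z" and "Z \<subseteq> roots_of_unity n" and "v \<in> cyclic_code n Z"
  shows "cyclic_shift n s v \<in> cyclic_code n Z"
proof -
  have "eval_word n (cyclic_shift n s v) \<beta> = 0" if "\<beta> \<in> Z" for \<beta>
  proof -
    have "\<beta> ^ n = 1" using that assms(3) by (auto simp: roots_of_unity_def)
    with assms(1) have "\<beta> \<noteq> 0" by (auto simp: power_0_left)
    moreover have "\<beta> ^ s * eval_word n (cyclic_shift n s v) \<beta> = 0"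
      using eval_cyclic_shift[OF \<open>\<beta> ^ n = 1\<close>] assms(4) that
      by (simp add: cyclic_code_eq_zeros[OF assms(1-3)])
    ultimately show ?thesis by simp
  qed
  then show ?thesis
    by (simp add: cyclic_code_eq_zeros[OF assms(1-3)] cyclic_shift_in_words)
qed

lemma is_cyclic_cyclic_code:
  assumes "0 < n" and "finite Z" and "Z \<subseteq> roots_of_unity n"
  shows "is_cyclic n (cyclic_code n Z)"
  unfolding is_cyclic_def
proof
  fix c
  assume "c \<in> cyclic_code n Z"
  then have "cyclic_shift n (n - 1) c \<in> cyclic_code n Z"
    by (rule cyclic_shift_in_cyclic_code[OF assms])
  moreover have "cyclic_shift n (n - 1) c = (\<lambda>i. if i < n then c ((i + n - 1) mod n) else 0)"
    using assms(1) by (simp add: cyclic_shift_def fun_eq_iff)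
  ultimately show "(\<lambda>i. if i < n then c ((i + n - 1) mod n) else 0) \<in> cyclic_code n Z" by simp
qed

lemma cyclic_shift_in_dual_code:
  assumes shift_closed: "\<And>v s. v \<in> C \<Longrightarrow> cyclic_shift n s v \<in> C"
    and y: "y \<in> dual_code n C"
  shows "cyclic_shift n s y \<in> dual_code n C"
proof -
  define s' where "s' = n - s mod n"
  have "(\<Sum>k<n. c k * cyclic_shift n s y k) = 0" if "c \<in> C" for c
  proof -
    have "(\<Sum>k<n. c k * cyclic_shift n s y k)
        = (\<Sum>k<n. c (((k + s) mod n + s') mod n) * y ((k + s) mod n))"
      by (intro sum.cong) (simp_all add: cyclic_shift_def mod_add_shift_cancel[of _ n s, folded s'_def])
    also have "\<dots> = (\<Sum>k<n. c ((k + s') mod n) * y k)"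
      by (rule sum_mod_add_shift[where g = "\<lambda>j. c ((j + s') mod n) * y j"])
    also have "\<dots> = (\<Sum>k<n. cyclic_shift n s' c k * y k)"
      by (simp add: cyclic_shift_def)
    also have "\<dots> = 0"
      using y shift_closed[OF that] by (simp add: dual_code_def)
    finally show ?thesis .
  qed
  then show ?thesis by (simp add: dual_code_def cyclic_shift_in_words)
qed

lemma subspace_dual_code: "word_space.subspace (dual_code n C)"
  by (rule word_space.subspaceI)
    (auto simp: dual_code_def words_def scale_word_def distrib_left sum.distrib
      mult.left_commute[where b = "_ :: 'a"] simp flip: sum_distrib_left)

definition power_word :: "nat \<Rightarrow> 'a::field \<Rightarrow> nat \<Rightarrow> 'a" where
  "power_word n \<gamma> = (\<lambda>i. if i < n then \<gamma> ^ i else 0)"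

lemma power_word_in_cyclic_code:
  assumes "0 < n" and "finite Z" and "Z \<subseteq> roots_of_unity n"
    and "\<gamma> ^ n = 1" and "\<And>\<beta>. \<beta> \<in> Z \<Longrightarrow> \<gamma> * \<beta> \<noteq> 1"
  shows "power_word n \<gamma> \<in> cyclic_code n Z"
proof -
  have "eval_word n (power_word n \<gamma>) \<beta> = 0" if "\<beta> \<in> Z" for \<beta>
  proof -
    have "(\<gamma> * \<beta>) ^ n = 1"
      using that assms(3,4) by (auto simp: roots_of_unity_def power_mult_distrib)
    with assms(5)[OF that] have "(\<Sum>i<n. (\<gamma> * \<beta>) ^ i) = 0" by (simp add: sum_gp_strict)
    then show ?thesis by (simp add: eval_word_def power_word_def power_mult_distrib)
  qed
  then show ?thesis by (simp add: cyclic_code_eq_zeros[OF assms(1-3)] power_word_def words_def)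
qed

lemma power_word_in_dual_code:
  assumes "0 < n" and "finite Z" and "Z \<subseteq> roots_of_unity n" and "\<beta> \<in> Z"
  shows "power_word n \<beta> \<in> dual_code n (cyclic_code n Z)"
  using assms by (auto simp: dual_code_def power_word_def words_def cyclic_code_eq_zeros eval_word_def)

lemma eval_word_dual_code_eq_0:
  assumes "0 < n" and "finite Z" and "Z \<subseteq> roots_of_unity n"
    and "y \<in> dual_code n (cyclic_code n Z)"
    and "\<gamma> ^ n = 1" and "\<And>\<beta>. \<beta> \<in> Z \<Longrightarrow> \<gamma> * \<beta> \<noteq> 1"
  shows "eval_word n y \<gamma> = 0"
proof -
  have "(\<Sum>i<n. power_word n \<gamma> i * y i) = 0"
    using power_word_in_cyclic_code[OF assms(1-3,5,6)] assms(4) unfolding dual_code_def by blast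
  then show ?thesis by (simp add: eval_word_def power_word_def mult.commute)
qed

lemma finite_set_prod: "finite A \<Longrightarrow> finite B \<Longrightarrow> finite (set_prod A B)"
proof -
  assume "finite A" "finite B"
  moreover have "set_prod A B = (\<lambda>(\<beta>, \<gamma>). \<beta> * \<gamma>) ` (A \<times> B)"
    by (auto simp: set_prod_def)
  ultimately show ?thesis by simp
qed

lemma set_prod_subset_roots_of_unity:
  "A \<subseteq> roots_of_unity n \<Longrightarrow> B \<subseteq> roots_of_unity n \<Longrightarrow> set_prod A B \<subseteq> roots_of_unity n"
  unfolding set_prod_def roots_of_unity_def by (auto simp: power_mult_distrib subset_iff)

lemma eval_word_mult_dual_code_eq_0:
  assumes "0 < n" and "finite A" and "finite B"
    and "A \<subseteq> roots_of_unity n" and "B \<subseteq> roots_of_unity n"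
    and f: "f \<in> cyclic_code n (set_prod A B)"
    and c: "c \<in> dual_code n (cyclic_code n A)" and "\<gamma> \<in> B"
  shows "eval_word n (\<lambda>k. f k * c k) \<gamma> = 0"
proof -
  have AB: "finite (set_prod A B)" "set_prod A B \<subseteq> roots_of_unity n"
    using assms(2-5) by (simp_all add: finite_set_prod set_prod_subset_roots_of_unity)
  define h where "h k = f k * \<gamma> ^ k" for k
  have "eval_word n h \<beta> = eval_word n f (\<beta> * \<gamma>)" for \<beta>
    by (simp add: h_def eval_word_def power_mult_distrib mult_ac)
  moreover have "\<beta> * \<gamma> \<in> set_prod A B" if "\<beta> \<in> A" for \<beta>
    using that \<open>\<gamma> \<in> B\<close> by (auto simp: set_prod_def)
  ultimately have "h \<in> cyclic_code n A"
    using f by (auto simp: cyclic_code_eq_zeros[OF assms(1,2,4)] cyclic_code_eq_zeros[OF assms(1) AB]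
        h_def words_def)
  with c have "(\<Sum>k<n. h k * c k) = 0" by (simp add: dual_code_def)
  then show ?thesis by (simp add: eval_word_def h_def mult_ac)
qed

section \<open>Weight and minimum distance\<close>

definition support :: "nat \<Rightarrow> (nat \<Rightarrow> 'a::zero) \<Rightarrow> nat set" where
  "support n v = {i. i < n \<and> v i \<noteq> 0}"

definition weight :: "nat \<Rightarrow> (nat \<Rightarrow> 'a::zero) \<Rightarrow> nat" where
  "weight n v = card (support n v)"

lemma finite_support [simp]: "finite (support n v)"
  by (simp add: support_def)

lemma support_diff_eq_empty_iff:
  "support n (x - y) = {} \<longleftrightarrow> (\<forall>i<n. x i = (y i :: 'a::ab_group_add))"
  by (auto simp: support_def)

lemma hdist_on_eq_weight: "hdist_on {..<n} x y = weight n (x - y :: nat \<Rightarrow> 'a::ab_group_add)"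
  unfolding hdist_on_def weight_def support_def by (rule arg_cong[where f = card]) auto

lemma weight_cyclic_shift: "weight n (cyclic_shift n s v) = weight n v"
proof -
  have weight_sum: "weight n w = (\<Sum>k<n. if w k \<noteq> 0 then 1 else 0)" for w :: "nat \<Rightarrow> 'a"
  proof -
    have "support n w = {k \<in> {..<n}. w k \<noteq> 0}" by (auto simp: support_def)
    then show ?thesis by (simp add: weight_def sum.inter_filter[symmetric])
  qed
  show ?thesis
    using sum_mod_add_shift[of "\<lambda>j. if v j \<noteq> 0 then 1::nat else 0" s n]
    by (simp add: weight_sum cyclic_shift_def)
qed

lemma min_dist_le_weight:
  fixes C :: "(nat \<Rightarrow> 'a::ab_group_add) set"
  assumes "0 \<in> C" and "c \<in> C" and "support n c \<noteq> {}"
  shows "min_dist n C \<le> weight n c"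
proof -
  have "\<exists>x\<in>C. \<exists>y\<in>C. (\<exists>i<n. x i \<noteq> y i) \<and> weight n c = hdist_on {..<n} x y"
    using assms by (intro bexI[of _ c] bexI[of _ 0]) (auto simp: support_def hdist_on_eq_weight)
  then show ?thesis unfolding min_dist_def by (rule Least_le)
qed

lemma min_dist_attained:
  assumes "word_space.subspace C" and "\<exists>c\<in>C. support n c \<noteq> {}"
  shows "\<exists>c\<in>C. support n c \<noteq> {} \<and> weight n c = min_dist n C"
proof -
  obtain c where "c \<in> C" "\<exists>i<n. c i \<noteq> 0"
    using assms(2) by (auto simp: support_def)
  then have "\<exists>w. \<exists>x\<in>C. \<exists>y\<in>C. (\<exists>i<n. x i \<noteq> y i) \<and> w = hdist_on {..<n} x y"
    using word_space.subspace_0[OF assms(1)] by (intro exI bexI[of _ c] bexI[of _ 0]) auto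
  from LeastI_ex[OF this] obtain x y where
    "x \<in> C" "y \<in> C" "\<exists>i<n. x i \<noteq> y i" "min_dist n C = weight n (x - y)"
    unfolding min_dist_def hdist_on_eq_weight by blast
  then show ?thesis
    using word_space.subspace_diff[OF assms(1)] by (metis support_diff_eq_empty_iff)
qed

lemma le_min_dist:
  assumes "word_space.subspace C" and "\<exists>c\<in>C. support n c \<noteq> {}"
    and "\<And>c. c \<in> C \<Longrightarrow> support n c \<noteq> {} \<Longrightarrow> L \<le> weight n c"
  shows "L \<le> min_dist n C"
  using min_dist_attained[OF assms(1,2)] assms(3) by metis

lemma exists_poly_mult_coeff_vanishing_on:
  assumes "finite (UNIV :: 'a::field set)" and "finite T" and "card T < k"
  shows "\<exists>h :: 'a poly. h \<noteq> 0 \<and> degree h < k \<and> (\<forall>i\<in>T. coeff (h * g) i = 0)"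
proof -
  let ?q = "card (UNIV :: 'a set)"
  define P where "P u = (\<Sum>j<k. monom (u j) j)" for u :: "nat \<Rightarrow> 'a"
  define Dom where "Dom = (\<Pi>\<^sub>E j\<in>{..<k}. (UNIV :: 'a set))"
  define restr where "restr u = restrict (coeff (P u * g)) T" for u
  have "2 \<le> ?q" using card_mono[OF assms(1), of "{0, 1}"] by simp
  then have "?q ^ card T < ?q ^ k" using assms(3) by simp
  moreover have "card Dom = ?q ^ k" by (simp add: Dom_def card_PiE)
  moreover have "card (\<Pi>\<^sub>E i\<in>T. UNIV :: 'a set) = ?q ^ card T"
    using assms(2) by (simp add: card_PiE)
  moreover have "restr ` Dom \<subseteq> (\<Pi>\<^sub>E i\<in>T. UNIV)" by (auto simp: restr_def)
  moreover have "finite (\<Pi>\<^sub>E i\<in>T. UNIV :: 'a set)"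
    using assms(1,2) by (simp add: finite_PiE)
  ultimately have "\<not> inj_on restr Dom" by (metis card_inj_on_le not_le)
  then obtain u1 u2 where u: "u1 \<in> Dom" "u2 \<in> Dom" "u1 \<noteq> u2" "restr u1 = restr u2"
    by (auto simp: inj_on_def)
  then obtain j where j: "j < k" "u1 j \<noteq> u2 j"
    using PiE_ext[of u1 "{..<k}" "\<lambda>_. UNIV" u2] by (auto simp: Dom_def)
  define h where "h = P u1 - P u2"
  have coeff_h: "coeff h i = (if i < k then u1 i - u2 i else 0)" for i
    by (simp add: h_def P_def coeff_sum coeff_monom)
  show ?thesis
  proof (intro exI conjI ballI)
    show "h \<noteq> 0" using coeff_h[of j] j by auto
    then show "degree h < k" by (intro degree_lessI) (simp_all add: coeff_h)
    fix i
    assume "i \<in> T"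
    then have "coeff (P u1 * g) i = coeff (P u2 * g) i"
      using fun_cong[OF u(4), of i] by (simp add: restr_def)
    then show "coeff (h * g) i = 0" by (simp add: h_def left_diff_distrib)
  qed
qed

lemma exists_cyclic_codeword_vanishing_on:
  assumes "finite (UNIV :: 'a::field set)" and "0 < n" and "finite Z" and "Z \<subseteq> roots_of_unity n"
    and "T \<subseteq> {..<n}" and "card T < n - card Z"
  shows "\<exists>f\<in>cyclic_code n (Z :: 'a set). support n f \<noteq> {} \<and> (\<forall>i\<in>T. f i = 0)"
proof -
  let ?g = "generator_poly Z"
  obtain h where h: "h \<noteq> 0" "degree h < n - card Z" "\<forall>i\<in>T. coeff (h * ?g) i = 0"
    using exists_poly_mult_coeff_vanishing_on[OF assms(1) finite_subset[OF assms(5)] assms(6)]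
    by blast
  have g0: "?g \<noteq> 0" and "degree ?g = card Z"
    using assms(3) by (simp_all add: generator_poly_nonzero degree_generator_poly)
  with h have deg: "degree (h * ?g) < n" by (simp add: degree_mult_eq)
  show ?thesis
  proof (intro bexI conjI)
    show "coeff (h * ?g) \<in> cyclic_code n Z"
      by (rule coeff_mult_generator_poly_in_cyclic_code[OF assms(2-4) deg])
    show "support n (coeff (h * ?g)) \<noteq> {}"
      using deg h(1) g0 by (auto simp: support_def)
  qed (use h(3) in simp)
qed

section \<open>The BCH bound and roots of unity\<close>

lemma vandermonde_weight_bound:
  fixes z x :: "nat \<Rightarrow> 'a::field"
  assumes inj: "inj_on x (support n z)" and sums: "\<And>j. j < L \<Longrightarrow> (\<Sum>i<n. z i * x i ^ j) = 0"
    and "support n z \<noteq> {}"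
  shows "L < weight n z"
proof (rule ccontr)
  assume "\<not> L < weight n z"
  obtain k where k: "k \<in> support n z" using assms(3) by blast
  \<comment> \<open>p has degree below L and vanishes at every x i of the support except x k\<close>
  define p where "p = generator_poly (x ` (support n z - {k}))"
  have "degree p \<le> card (support n z - {k})"
    by (simp add: p_def degree_generator_poly card_image_le)
  also have "\<dots> < weight n z" using card_Diff1_less[OF finite_support k] by (simp add: weight_def)
  finally have deg: "degree p < L" using \<open>\<not> L < weight n z\<close> by simp
  have "(\<Sum>i<n. z i * poly p (x i)) = (\<Sum>j\<le>degree p. coeff p j * (\<Sum>i<n. z i * x i ^ j))"
    by (simp add: poly_altdef sum_distrib_left sum_distrib_right mult_ac sum.swap[of _ "{..<n}"])
  also have "\<dots> = 0" using sums deg by simp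
  finally have "(\<Sum>i<n. z i * poly p (x i)) = 0" .
  moreover have "(\<Sum>i<n. z i * poly p (x i)) = z k * poly p (x k)"
  proof (rule sum.remove[THEN trans])
    show "k \<in> {..<n}" "finite {..<n}" using k by (auto simp: support_def)
    have "z i * poly p (x i) = 0" if "i \<in> {..<n} - {k}" for i
      using that by (cases "z i = 0") (auto simp: p_def poly_generator_poly_eq_0_iff support_def)
    then have "(\<Sum>i\<in>{..<n} - {k}. z i * poly p (x i)) = 0" by (rule sum.neutral[OF ballI])
    then show "z k * poly p (x k) + (\<Sum>i\<in>{..<n} - {k}. z i * poly p (x i)) = z k * poly p (x k)"
      by simp
  qed
  moreover have "poly p (x k) \<noteq> 0"
    using k inj by (auto simp: p_def poly_generator_poly_eq_0_iff dest: inj_onD)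
  ultimately show False using k by (simp add: support_def)
qed

lemma bch_bound:
  fixes y :: "nat \<Rightarrow> 'a::field"
  assumes "c \<noteq> 0" and inj: "inj_on (\<lambda>i. \<rho> ^ i) {..<n}"
    and zeros: "\<And>e. e < L \<Longrightarrow> eval_word n y (c * \<rho> ^ e) = 0" and "support n y \<noteq> {}"
  shows "L < weight n y"
proof -
  have supp: "support n (\<lambda>i. y i * c ^ i) = support n y" using assms(1) by (simp add: support_def)
  have "L < weight n (\<lambda>i. y i * c ^ i)"
  proof (rule vandermonde_weight_bound)
    show "inj_on (\<lambda>i. \<rho> ^ i) (support n (\<lambda>i. y i * c ^ i))"
      using inj by (rule inj_on_subset) (auto simp: support_def)
    show "(\<Sum>i<n. y i * c ^ i * (\<rho> ^ i) ^ j) = 0" if "j < L" for j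
      using zeros[OF that] by (simp add: eval_word_def power_mult_distrib mult_ac flip: power_mult)
  qed (use assms(4) supp in simp)
  then show ?thesis by (simp add: weight_def supp)
qed

lemma primitive_root_of_unity_pow_eq_1_iff:
  assumes "primitive_root_of_unity n \<alpha>"
  shows "\<alpha> ^ e = 1 \<longleftrightarrow> n dvd e"
proof
  assume "\<alpha> ^ e = 1"
  moreover have "\<alpha> ^ n = 1" and "e mod n < n"
    using assms by (simp_all add: primitive_root_of_unity_def)
  ultimately have "e mod n = 0"
    using assms power_mod_eq_if_power_eq_1[of \<alpha> n e] by (auto simp: primitive_root_of_unity_def)
  then show "n dvd e" by (simp add: dvd_eq_mod_eq_0)
next
  assume "n dvd e"
  with assms show "\<alpha> ^ e = 1" by (auto simp: primitive_root_of_unity_def power_mult elim!: dvdE)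
qed

lemma primitive_root_of_unity_nonzero: "primitive_root_of_unity n \<alpha> \<Longrightarrow> \<alpha> \<noteq> 0"
  by (auto simp: primitive_root_of_unity_def power_0_left)

lemma primitive_root_of_unity_power:
  assumes "primitive_root_of_unity n \<alpha>" and "coprime b n"
  shows "primitive_root_of_unity n (\<alpha> ^ b)"
proof -
  have "(\<alpha> ^ b) ^ k = 1 \<longleftrightarrow> n dvd k" for k
  proof -
    have "(\<alpha> ^ b) ^ k = 1 \<longleftrightarrow> n dvd b * k"
      by (simp add: primitive_root_of_unity_pow_eq_1_iff[OF assms(1)] flip: power_mult)
    also have "\<dots> \<longleftrightarrow> n dvd k"
      using assms(2) by (simp add: coprime_commute coprime_dvd_mult_right_iff)
    finally show ?thesis .
  qed
  moreover have "0 < n" using assms(1) by (simp add: primitive_root_of_unity_def)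
  ultimately show ?thesis
    by (auto simp: primitive_root_of_unity_def dest: nat_dvd_not_less)
qed

lemma primitive_root_of_unity_inverse:
  "primitive_root_of_unity n \<alpha> \<Longrightarrow> primitive_root_of_unity n (inverse \<alpha>)"
  by (simp add: primitive_root_of_unity_def power_inverse)

lemma inj_on_primitive_root_powers:
  assumes "primitive_root_of_unity n \<alpha>"
  shows "inj_on (\<lambda>i. \<alpha> ^ i) {..<n}"
proof -
  have ordered: "i = j" if "i \<le> j" "j < n" "\<alpha> ^ i = \<alpha> ^ j" for i j
  proof -
    have "\<alpha> ^ i * \<alpha> ^ (j - i) = \<alpha> ^ j" using \<open>i \<le> j\<close> by (simp flip: power_add)
    then have "\<alpha> ^ i * \<alpha> ^ (j - i) = \<alpha> ^ i * 1" using \<open>\<alpha> ^ i = \<alpha> ^ j\<close> by simp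
    then have "n dvd j - i"
      using primitive_root_of_unity_nonzero[OF assms]
      by (simp add: primitive_root_of_unity_pow_eq_1_iff[OF assms])
    moreover have "j - i < n" using that by linarith
    ultimately have "j - i = 0" using nat_dvd_not_less by blast
    with that show ?thesis by simp
  qed
  show ?thesis
  proof (rule inj_onI)
    fix i j
    assume "i \<in> {..<n}" "j \<in> {..<n}" "\<alpha> ^ i = \<alpha> ^ j"
    then show "i = j" using ordered[of i j] ordered[of j i] by (cases "i \<le> j") auto
  qed
qed

section \<open>The code with defining set AB\<close>

lemma ceiling_divide_eq_2:
  assumes "0 < r" and "r < k" and "k \<le> 2 * r"
  shows "\<lceil>real k / real r\<rceil> = 2"
proof (rule ceiling_unique)
  show "real_of_int 2 - 1 < real k / real r" using assms by (simp add: less_divide_eq)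
  show "real k / real r \<le> real_of_int 2" using assms by (simp add: divide_le_eq)
qed

locale two_run_cyclic_code =
  fixes \<alpha> :: "'a::field" and n \<delta> b m t l :: nat
  assumes primitive: "primitive_root_of_unity n \<alpha>"
    and delta: "2 \<le> \<delta>" and m: "1 \<le> m" and coprime: "coprime b n"
    and l_lower: "m - 1 + \<delta> \<le> l" and l_upper: "l + \<delta> \<le> n"
begin

definition \<theta> :: 'a where "\<theta> = \<alpha> ^ b"

definition a :: "nat \<Rightarrow> 'a" where "a j = \<alpha> ^ (t + j * b)"

definition A :: "'a set" where "A = a ` {..<m} \<union> {a l}"

definition B :: "'a set" where "B = (\<lambda>j. \<alpha> ^ (j * b)) ` {..\<delta> - 2}"

abbreviation C :: "(nat \<Rightarrow> 'a) set" where "C \<equiv> cyclic_code n (set_prod A B)"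

definition d_dual :: nat where "d_dual = min_dist n (dual_code n (cyclic_code n A))"

lemma n_pos: "0 < n"
  using primitive by (simp add: primitive_root_of_unity_def)

lemma primitive_\<theta>: "primitive_root_of_unity n \<theta>"
  unfolding \<theta>_def by (rule primitive_root_of_unity_power[OF primitive coprime])

lemma \<theta>_nonzero: "\<theta> \<noteq> 0"
  by (rule primitive_root_of_unity_nonzero[OF primitive_\<theta>])

lemma a_eq: "a j = \<alpha> ^ t * \<theta> ^ j"
  by (simp add: a_def \<theta>_def power_add power_mult mult.commute)

lemma a_add: "a j * \<theta> ^ i = a (j + i)"
  by (simp add: a_eq power_add mult.assoc)

lemma a_nonzero: "a j \<noteq> 0"
  using primitive_root_of_unity_nonzero[OF primitive] \<theta>_nonzero by (simp add: a_eq)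

lemma a_in_roots_of_unity: "a j \<in> roots_of_unity n"
  by (simp add: roots_of_unity_def a_def primitive_root_of_unity_pow_eq_1_iff[OF primitive]
      flip: power_mult)

lemma inj_on_a: "inj_on a {..<n}"
  using inj_on_primitive_root_powers[OF primitive_\<theta>] primitive_root_of_unity_nonzero[OF primitive]
  by (simp add: inj_on_def a_eq)

lemma A_subset: "A \<subseteq> roots_of_unity n" and finite_A: "finite A"
  using a_in_roots_of_unity by (auto simp: A_def)

lemma B_eq: "B = (\<lambda>j. \<theta> ^ j) ` {..\<delta> - 2}"
  unfolding B_def \<theta>_def by (intro image_cong refl) (simp add: mult.commute flip: power_mult)

lemma B_subset: "B \<subseteq> roots_of_unity n" and finite_B: "finite B"
  by (auto simp: B_eq roots_of_unity_def primitive_root_of_unity_pow_eq_1_iff[OF primitive_\<theta>]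
      simp flip: power_mult)

lemma AB_subset: "set_prod A B \<subseteq> roots_of_unity n" and finite_AB: "finite (set_prod A B)"
  by (simp_all add: set_prod_subset_roots_of_unity A_subset B_subset finite_set_prod finite_A finite_B)

lemma set_prod_A_B: "set_prod A B = a ` ({..<m + \<delta> - 2} \<union> {l..<l + \<delta> - 1})"
proof (intro set_eqI iffI)
  fix x
  assume "x \<in> set_prod A B"
  then obtain j i where "x = a (j + i)" "j < m \<or> j = l" "i \<le> \<delta> - 2"
    by (auto simp: set_prod_def A_def B_eq a_add)
  with delta show "x \<in> a ` ({..<m + \<delta> - 2} \<union> {l..<l + \<delta> - 1})" by force
next
  fix x
  assume "x \<in> a ` ({..<m + \<delta> - 2} \<union> {l..<l + \<delta> - 1})"
  then obtain e where "x = a e" "e < m + \<delta> - 2 \<or> l \<le> e \<and> e < l + \<delta> - 1" by auto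
  then obtain j i where "x = a j * \<theta> ^ i" "j < m \<or> j = l" "i \<le> \<delta> - 2"
  proof (elim disjE conjE)
    assume "x = a e" "e < m + \<delta> - 2"
    show ?thesis
    proof (rule that[of "min e (m - 1)" "e - min e (m - 1)"])
      show "x = a (min e (m - 1)) * \<theta> ^ (e - min e (m - 1))" by (simp add: a_add \<open>x = a e\<close>)
      show "min e (m - 1) < m \<or> min e (m - 1) = l" using m by linarith
      show "e - min e (m - 1) \<le> \<delta> - 2" using \<open>e < m + \<delta> - 2\<close> by simp
    qed
  next
    assume "x = a e" "l \<le> e" "e < l + \<delta> - 1"
    then show ?thesis using that[of l "e - l"] by (simp add: a_add)
  qed
  then show "x \<in> set_prod A B" by (auto simp: set_prod_def A_def B_eq)
qed

lemma card_set_prod_A_B: "card (set_prod A B) = m + 2 * \<delta> - 3"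
proof -
  have "{..<m + \<delta> - 2} \<union> {l..<l + \<delta> - 1} \<subseteq> {..<n}" using l_lower l_upper by auto
  then have "card (set_prod A B) = card ({..<m + \<delta> - 2} \<union> {l..<l + \<delta> - 1})"
    unfolding set_prod_A_B by (intro card_image inj_on_subset[OF inj_on_a])
  also have "\<dots> = (m + \<delta> - 2) + (\<delta> - 1)"
    using l_lower by (subst card_Un_disjoint) auto
  finally show ?thesis using delta m by simp
qed

lemma code_dim_C: "code_dim C = n + 3 - (m + 2 * \<delta>)"
  using code_dim_cyclic_code[OF n_pos finite_AB AB_subset] card_set_prod_A_B delta by simp

lemma eval_dual_code_inverse_a:
  assumes y: "y \<in> dual_code n (cyclic_code n A)" and "j < n" "m \<le> j" "j \<noteq> l"
  shows "eval_word n y (inverse (a j)) = 0"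
proof (rule eval_word_dual_code_eq_0[OF n_pos finite_A A_subset y])
  show "inverse (a j) ^ n = 1"
    using a_in_roots_of_unity by (simp add: roots_of_unity_def power_inverse)
  fix \<beta>
  assume "\<beta> \<in> A"
  then obtain j' where "\<beta> = a j'" "j' < m \<or> j' = l" by (auto simp: A_def)
  moreover have "j' < n" if "j' < m \<or> j' = l" using that l_lower l_upper delta by linarith
  ultimately show "inverse (a j) * \<beta> \<noteq> 1"
    using assms(2-4) inj_on_a a_nonzero by (auto simp: field_simps dest: inj_onD)
qed

lemma weight_dual_code_gt_gap:
  assumes y: "y \<in> dual_code n (cyclic_code n A)" and "support n y \<noteq> {}"
    and gap: "\<And>e. e < L \<Longrightarrow> j\<^sub>0 + e < n \<and> m \<le> j\<^sub>0 + e \<and> j\<^sub>0 + e \<noteq> l"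
  shows "L < weight n y"
proof (rule bch_bound)
  show "inverse (a j\<^sub>0) \<noteq> 0" by (simp add: a_nonzero)
  show "inj_on (\<lambda>i. inverse \<theta> ^ i) {..<n}"
    by (rule inj_on_primitive_root_powers[OF primitive_root_of_unity_inverse[OF primitive_\<theta>]])
  fix e
  assume "e < L"
  have "inverse (a j\<^sub>0) * inverse \<theta> ^ e = inverse (a (j\<^sub>0 + e))"
    by (simp add: power_inverse flip: a_add)
  then show "eval_word n y (inverse (a j\<^sub>0) * inverse \<theta> ^ e) = 0"
    using eval_dual_code_inverse_a[OF y] gap[OF \<open>e < L\<close>] by simp
qed (rule assms(2))

lemma dual_code_nontrivial: "\<exists>c\<in>dual_code n (cyclic_code n A). support n c \<noteq> {}"
proof
  show "power_word n (a 0) \<in> dual_code n (cyclic_code n A)"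
    using m by (intro power_word_in_dual_code[OF n_pos finite_A A_subset]) (auto simp: A_def)
  show "support n (power_word n (a 0)) \<noteq> {}"
    using n_pos by (auto simp: support_def power_word_def)
qed

lemma d_dual_gt: "l - m < d_dual" "n - 1 - l < d_dual"
proof -
  have subspace: "word_space.subspace (dual_code n (cyclic_code n A))" by (rule subspace_dual_code)
  show "l - m < d_dual"
    unfolding d_dual_def Suc_le_eq[symmetric]
    by (rule le_min_dist[OF subspace dual_code_nontrivial])
      (use l_upper in \<open>auto simp: Suc_le_eq intro!: weight_dual_code_gt_gap[of _ _ m]\<close>)
  show "n - 1 - l < d_dual"
    unfolding d_dual_def Suc_le_eq[symmetric]
    by (rule le_min_dist[OF subspace dual_code_nontrivial])
      (use l_lower in \<open>auto simp: Suc_le_eq intro!: weight_dual_code_gt_gap[of _ _ "Suc l"]\<close>)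
qed

lemma delta_le_d_dual: "\<delta> \<le> d_dual"
  using d_dual_gt(1) l_lower m by linarith

lemma subspace_C: "word_space.subspace C"
  by (rule subspace_cyclic_code[OF n_pos finite_AB AB_subset])

lemma weight_C_gt:
  assumes "f \<in> C" and "support n f \<noteq> {}"
  shows "m + \<delta> - 2 < weight n f"
proof (rule bch_bound[where c = "\<alpha> ^ t"])
  show "\<alpha> ^ t \<noteq> 0" using primitive_root_of_unity_nonzero[OF primitive] by simp
  show "inj_on (\<lambda>i. \<theta> ^ i) {..<n}" by (rule inj_on_primitive_root_powers[OF primitive_\<theta>])
  fix e
  assume "e < m + \<delta> - 2"
  then have "a e \<in> set_prod A B" by (simp add: set_prod_A_B)
  with assms(1) show "eval_word n f (\<alpha> ^ t * \<theta> ^ e) = 0"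
    by (simp add: cyclic_code_eq_zeros[OF n_pos finite_AB AB_subset] flip: a_eq)
qed (rule assms(2))

lemma punct_dist_ge_support_dual:
  assumes c: "c \<in> dual_code n (cyclic_code n A)"
  shows "punct_dist_ge C (support n c) \<delta>"
  unfolding punct_dist_ge_def
proof (intro ballI impI)
  fix x y
  assume "x \<in> C" "y \<in> C" "\<exists>i\<in>support n c. x i \<noteq> y i"
  define f where "f = x - y"
  have f: "f \<in> C" using \<open>x \<in> C\<close> \<open>y \<in> C\<close> word_space.subspace_diff[OF subspace_C] by (simp add: f_def)
  have supp: "support n (\<lambda>k. f k * c k) = {i \<in> support n c. x i \<noteq> y i}"
    by (auto simp: support_def f_def)
  have "\<delta> - 1 < weight n (\<lambda>k. f k * c k)"
  proof (rule bch_bound[where c = 1])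
    show "inj_on (\<lambda>i. \<theta> ^ i) {..<n}" by (rule inj_on_primitive_root_powers[OF primitive_\<theta>])
    show "eval_word n (\<lambda>k. f k * c k) (1 * \<theta> ^ e) = 0" if "e < \<delta> - 1" for e
      using that eval_word_mult_dual_code_eq_0[OF n_pos finite_A finite_B A_subset B_subset f c]
      by (simp add: B_eq)
  qed (use supp \<open>\<exists>i\<in>support n c. x i \<noteq> y i\<close> in auto)
  then show "\<delta> \<le> hdist_on (support n c) x y"
    using supp by (simp add: weight_def hdist_on_def)
qed

lemma is_LRC_C: "is_LRC n C (d_dual + 1 - \<delta>) \<delta>"
  unfolding is_LRC_def has_locality_def
proof (intro conjI allI impI)
  show "1 \<le> d_dual + 1 - \<delta>" "2 \<le> \<delta>" using delta_le_d_dual delta by simp_all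
  fix i
  assume "i < n"
  obtain c where c: "c \<in> dual_code n (cyclic_code n A)" "support n c \<noteq> {}" "weight n c = d_dual"
    using min_dist_attained[OF subspace_dual_code dual_code_nontrivial] by (auto simp: d_dual_def)
  then obtain p where p: "p < n" "c p \<noteq> 0" by (auto simp: support_def)
  define c' where "c' = cyclic_shift n ((p + n - i) mod n) c"
  have "c' \<in> dual_code n (cyclic_code n A)"
    unfolding c'_def using c(1)
    by (intro cyclic_shift_in_dual_code cyclic_shift_in_cyclic_code[OF n_pos finite_A A_subset])
  moreover have "(i + (p + n - i) mod n) mod n = p"
    using \<open>i < n\<close> p(1) by (simp add: mod_add_right_eq)
  then have "i \<in> support n c'" using \<open>i < n\<close> p(2) by (simp add: support_def c'_def cyclic_shift_def)
  moreover have "weight n c' = d_dual" using c(3) by (simp add: c'_def weight_cyclic_shift)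
  ultimately show "\<exists>S\<subseteq>{..<n}. i \<in> S \<and> card S \<le> d_dual + 1 - \<delta> + \<delta> - 1 \<and> punct_dist_ge C S \<delta>"
    using delta_le_d_dual punct_dist_ge_support_dual
    by (intro exI[of _ "support n c'"]) (auto simp: support_def weight_def)
qed

lemma vanishes_on_support_dual:
  assumes c: "c \<in> dual_code n (cyclic_code n A)" and f: "f \<in> C"
    and D: "card D < \<delta>" "finite D" and vanish: "\<And>i. i \<in> support n c - D \<Longrightarrow> f i = 0"
  shows "\<forall>i\<in>support n c. f i = 0"
proof (rule ccontr)
  assume "\<not> (\<forall>i\<in>support n c. f i = 0)"
  then have "\<delta> \<le> hdist_on (support n c) f 0"
    using punct_dist_ge_support_dual[OF c] f word_space.subspace_0[OF subspace_C]
    by (auto simp: punct_dist_ge_def)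
  also have "\<dots> \<le> card D"
    using vanish D(2) by (auto simp: hdist_on_def intro!: card_mono)
  finally show False using D(1) by simp
qed

lemma exists_codeword_weight_le:
  assumes "finite (UNIV :: 'a set)" and small: "int \<delta> - 2 < int n - int m - int d_dual"
  shows "\<exists>f\<in>C. support n f \<noteq> {} \<and> weight n f \<le> m + \<delta> - 1"
proof -
  obtain c where c: "c \<in> dual_code n (cyclic_code n A)" "weight n c = d_dual"
    using min_dist_attained[OF subspace_dual_code dual_code_nontrivial] by (auto simp: d_dual_def)
  define S where "S = support n c"
  have S: "S \<subseteq> {..<n}" "card S = d_dual" using c(2) by (auto simp: S_def support_def weight_def)
  have "\<delta> - 1 \<le> card S" using S(2) delta_le_d_dual by simp
  then obtain D where D: "D \<subseteq> S" "card D = \<delta> - 1" by (meson obtain_subset_with_card_n)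
  have "card ({..<n} - S) = n - d_dual"
    using S finite_subset[OF S(1)] by (simp add: card_Diff_subset)
  then have "n + 1 - m - \<delta> - d_dual \<le> card ({..<n} - S)" using m by linarith
  then obtain T where T: "T \<subseteq> {..<n} - S" "card T = n + 1 - m - \<delta> - d_dual"
    by (meson obtain_subset_with_card_n)
  have fin: "finite S" "finite D" "finite T"
    using S(1) D(1) T(1) by (auto intro: finite_subset)
  have "card (S - D \<union> T) \<le> card (S - D) + card T" by (rule card_Un_le)
  also have "\<dots> < n - card (set_prod A B)"
    using S(2) D T(2) fin small delta_le_d_dual l_lower l_upper delta m
    by (simp add: card_Diff_subset card_set_prod_A_B)
  finally obtain f where f: "f \<in> C" "support n f \<noteq> {}" "\<forall>i\<in>S - D \<union> T. f i = 0"
    using exists_cyclic_codeword_vanishing_on[OF assms(1) n_pos finite_AB AB_subset, of "S - D \<union> T"]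
      S(1) T(1) by auto
  have "\<forall>i\<in>S. f i = 0"
    using vanishes_on_support_dual[OF c(1) f(1), of D] D(2) fin(2) f(3) delta by (auto simp: S_def)
  with f(3) have "support n f \<subseteq> {..<n} - (S \<union> T)" by (auto simp: support_def)
  then have "weight n f \<le> card ({..<n} - (S \<union> T))"
    unfolding weight_def by (rule card_mono[rotated]) simp
  also have "\<dots> = n - card (S \<union> T)"
    using S(1) T(1) fin by (subst card_Diff_subset) auto
  also have "card (S \<union> T) = d_dual + (n + 1 - m - \<delta> - d_dual)"
    using T fin S(2) by (subst card_Un_disjoint) auto
  finally have "weight n f \<le> n - (d_dual + (n + 1 - m - \<delta> - d_dual))" .
  with f(1,2) small show ?thesis by auto
qed

lemma min_dist_C:
  assumes "finite (UNIV :: 'a set)" and "int \<delta> - 2 < int n - int m - int d_dual"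
  shows "min_dist n C = m + \<delta> - 1"
proof -
  obtain f where f: "f \<in> C" "support n f \<noteq> {}" "weight n f \<le> m + \<delta> - 1"
    using exists_codeword_weight_le[OF assms] by blast
  have "min_dist n C \<le> m + \<delta> - 1"
    using min_dist_le_weight[OF word_space.subspace_0[OF subspace_C] f(1,2)] f(3) by simp
  moreover have "m + \<delta> - 1 \<le> min_dist n C"
  proof (rule le_min_dist[OF subspace_C])
    show "\<exists>c\<in>C. support n c \<noteq> {}" using f(1,2) by blast
    show "m + \<delta> - 1 \<le> weight n c" if "c \<in> C" "support n c \<noteq> {}" for c
      using weight_C_gt[OF that] delta by linarith
  qed
  ultimately show ?thesis by simp
qed

lemma is_optimal_LRC_C:
  assumes "finite (UNIV :: 'a set)" and small: "int \<delta> - 2 < int n - int m - int d_dual"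
  shows "is_optimal_LRC n C (d_dual + 1 - \<delta>) \<delta>"
proof -
  have "\<lceil>real (n + 3 - (m + 2 * \<delta>)) / real (d_dual + 1 - \<delta>)\<rceil> = 2"
    by (rule ceiling_divide_eq_2)
      (use d_dual_gt delta_le_d_dual small l_lower l_upper delta m in linarith)+
  moreover have "m + 2 * \<delta> \<le> n + 3" using l_lower l_upper by linarith
  ultimately show ?thesis
    using m is_LRC_C by (simp add: is_optimal_LRC_def code_dim_C min_dist_C[OF assms] of_nat_diff)
qed

end

theorem corollary4p5:
  fixes \<alpha> :: "'a::{field,finite}" and n \<delta> b m t l :: nat
  assumes "n dvd (card (UNIV :: 'a set) - 1)"
    and "primitive_root_of_unity n \<alpha>"
    and "2 \<le> \<delta>" and "1 \<le> b" and "1 \<le> m" and "coprime b n"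
    and "t < n"
    and "m - 1 + \<delta> \<le> l" and "l + \<delta> \<le> n"
  defines "A \<equiv> (\<lambda>j. \<alpha> ^ (t + j * b)) ` {..<m} \<union> {\<alpha> ^ (t + l * b)}"
    and "B \<equiv> (\<lambda>j. \<alpha> ^ (j * b)) ` {..\<delta> - 2}"
    and "dAp \<equiv> min_dist n (dual_code n (cyclic_code n ((\<lambda>j. \<alpha> ^ (t + j * b)) ` {..<m} \<union> {\<alpha> ^ (t + l * b)})))"
  shows "is_cyclic n (cyclic_code n (set_prod A B))
       \<and> is_LRC n (cyclic_code n (set_prod A B)) (dAp + 1 - \<delta>) \<delta>
       \<and> code_dim (cyclic_code n (set_prod A B)) = n + 3 - (m + 2 * \<delta>)
       \<and> (int \<delta> - 2 < int n - int m - int dAp \<longrightarrow>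
            is_optimal_LRC n (cyclic_code n (set_prod A B)) (dAp + 1 - \<delta>) \<delta>
            \<and> min_dist n (cyclic_code n (set_prod A B)) = m + \<delta> - 1)"
proof -
  interpret L: two_run_cyclic_code \<alpha> n \<delta> b m t l
    using assms(2,3,5,6,8,9) by unfold_locales
  have "A = L.A" "B = L.B" "dAp = L.d_dual"
    by (simp_all add: A_def B_def dAp_def L.d_dual_def L.A_def L.a_def L.B_def)
  then show ?thesis
    using is_cyclic_cyclic_code[OF L.n_pos L.finite_AB L.AB_subset] L.is_LRC_C L.code_dim_C
      L.is_optimal_LRC_C[OF finite_UNIV] L.min_dist_C[OF finite_UNIV]
    by simp
qed

end
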